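(* For every point set $X$ that is a permutation, $\mathrm{GB}(X)\le 2\,\mathrm{opt}(X)$.
   Context: Points have integer coordinates; $X$ is a permutation if every horizontal and every vertical line contains at most one point of $X$. Two points are collinear if they share an $x$- or a $y$-coordinate; for non-collinear $p,q$, $\square_{p,q}$ is the smallest closed axis-parallel rectangle containing both; the pair is satisfied in $S$ if some $r\in S\setminus\{p,q\}$ lies in $\square_{p,q}$, and $S$ is satisfied if all its non-collinear pairs are. $\mathrm{opt}(X)$ is the minimum $|Y|$ with $X\cup Y$ satisfied. Guillotine bound: a guillotine partitioning tree $T$ is built as follows. The root $r$ has region $S(r)=B$, a bounding box of $X$. While some leaf $v$ has $|S(v)\cap X|>1$, choose such $v$ and a vertical or horizontal line $L(v)$ inside $S(v)$ containing no point of $X$ that splits $S(v)$ into two rectangles $S',S''$ with $X\cap S'\ne\emptyset\ne X\cap S''$; give $v$ two children with regions $S'$ and $S''$. The cost of an internal vertex $v$ is the number of pairs of points of $X\cap S(v)$ that are consecutive in increasing $y$-order (if $L(v)$ is vertical) or in increasing $x$-order (if $L(v)$ is horizontal) and lie on opposite sides of $L(v)$; leaves cost $0$. $\mathrm{GB}_T(X)$ is the total cost and $\mathrm{GB}(X)=\max_T\mathrm{GB}_T(X)$. *)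

theory Defs
  imports Complex_Main
begin

type_synonym point = "int \<times> int"

definition is_permutation :: "point set \<Rightarrow> bool" where
  "is_permutation X \<longleftrightarrow>
     (\<forall>p\<in>X. \<forall>q\<in>X. p \<noteq> q \<longrightarrow> fst p \<noteq> fst q \<and> snd p \<noteq> snd q)"

definition collinear_pt :: "point \<Rightarrow> point \<Rightarrow> bool" where
  "collinear_pt p q \<longleftrightarrow> fst p = fst q \<or> snd p = snd q"

definition in_box :: "point \<Rightarrow> point \<Rightarrow> point \<Rightarrow> bool" where
  "in_box p q r \<longleftrightarrow>
     min (fst p) (fst q) \<le> fst r \<and> fst r \<le> max (fst p) (fst q) \<and>
     min (snd p) (snd q) \<le> snd r \<and> snd r \<le> max (snd p) (snd q)"

definition pair_satisfied :: "point set \<Rightarrow> point \<Rightarrow> point \<Rightarrow> bool" where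
  "pair_satisfied S p q \<longleftrightarrow> (\<exists>r \<in> S - {p, q}. in_box p q r)"

definition satisfied :: "point set \<Rightarrow> bool" where
  "satisfied S \<longleftrightarrow>
     (\<forall>p\<in>S. \<forall>q\<in>S. \<not> collinear_pt p q \<longrightarrow> pair_satisfied S p q)"

definition opt :: "point set \<Rightarrow> nat" where
  "opt X = (LEAST k. \<exists>Y. finite Y \<and> card Y = k \<and> satisfied (X \<union> Y))"

text \<open>Guillotine partitioning trees. A region is a closed rectangle
  [a,b] x [c,d], encoded as (a,b,c,d). VCut l: vertical line x = l;
  HCut l: horizontal line y = l.\<close>
datatype gtree = Leaf | VCut real gtree gtree | HCut real gtree gtree

type_synonym rect = "real \<times> real \<times> real \<times> real"

definition inR :: "point set \<Rightarrow> rect \<Rightarrow> point set" where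
  "inR X R = (case R of (a,b,c,d) \<Rightarrow>
     {p \<in> X. a \<le> real_of_int (fst p) \<and> real_of_int (fst p) \<le> b \<and>
              c \<le> real_of_int (snd p) \<and> real_of_int (snd p) \<le> d})"

definition is_bbox :: "point set \<Rightarrow> rect \<Rightarrow> bool" where
  "is_bbox X R \<longleftrightarrow> inR X R = X"

fun valid_gtree :: "point set \<Rightarrow> rect \<Rightarrow> gtree \<Rightarrow> bool" where
  "valid_gtree X R Leaf \<longleftrightarrow> card (inR X R) \<le> 1"
| "valid_gtree X (a,b,c,d) (VCut l T1 T2) \<longleftrightarrow>
     a < l \<and> l < b \<and>
     (\<forall>p \<in> inR X (a,b,c,d). real_of_int (fst p) \<noteq> l) \<and>
     inR X (a,l,c,d) \<noteq> {} \<and> inR X (l,b,c,d) \<noteq> {} \<and>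
     valid_gtree X (a,l,c,d) T1 \<and> valid_gtree X (l,b,c,d) T2"
| "valid_gtree X (a,b,c,d) (HCut l T1 T2) \<longleftrightarrow>
     c < l \<and> l < d \<and>
     (\<forall>p \<in> inR X (a,b,c,d). real_of_int (snd p) \<noteq> l) \<and>
     inR X (a,b,c,l) \<noteq> {} \<and> inR X (a,b,l,d) \<noteq> {} \<and>
     valid_gtree X (a,b,c,l) T1 \<and> valid_gtree X (a,b,l,d) T2"

definition vcost :: "point set \<Rightarrow> real \<Rightarrow> nat" where
  "vcost S l = card {(p,q). p \<in> S \<and> q \<in> S \<and> snd p < snd q \<and>
       \<not> (\<exists>r\<in>S. snd p < snd r \<and> snd r < snd q) \<and>
       (real_of_int (fst p) < l \<longleftrightarrow> l < real_of_int (fst q))}"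

definition hcost :: "point set \<Rightarrow> real \<Rightarrow> nat" where
  "hcost S l = card {(p,q). p \<in> S \<and> q \<in> S \<and> fst p < fst q \<and>
       \<not> (\<exists>r\<in>S. fst p < fst r \<and> fst r < fst q) \<and>
       (real_of_int (snd p) < l \<longleftrightarrow> l < real_of_int (snd q))}"

fun gb_tree :: "point set \<Rightarrow> rect \<Rightarrow> gtree \<Rightarrow> nat" where
  "gb_tree X R Leaf = 0"
| "gb_tree X (a,b,c,d) (VCut l T1 T2) =
     vcost (inR X (a,b,c,d)) l + gb_tree X (a,l,c,d) T1 + gb_tree X (l,b,c,d) T2"
| "gb_tree X (a,b,c,d) (HCut l T1 T2) =
     hcost (inR X (a,b,c,d)) l + gb_tree X (a,b,c,l) T1 + gb_tree X (a,b,l,d) T2"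

definition GB :: "point set \<Rightarrow> nat" where
  "GB X = Max {gb_tree X B T | B T. is_bbox X B \<and> valid_gtree X B T}"

end

theory Submission
  imports Defs
begin

text \<open>Fix a satisfied superset \<open>Z = X \<union> Y\<close> and measure a finite point set \<open>S\<close> by its
  excess \<open>|S| - #columns(S) - #rows(S)\<close>. A nonempty satisfied set has excess at least \<open>-1\<close>:
  peeling off its rightmost column leaves a satisfied set, and satisfiedness forces that column
  to share a row with the rest. A vertical cut splits a satisfied set into two satisfied halves
  whose excesses add up to the excess of the whole minus the number of rows meeting both halves.
  Every pair of points of \<open>X\<close> that are consecutive in \<open>y\<close>-order and separated by the cut
  spans such a shared row, and a row is spanned by at most two consecutive pairs, so a cut costs
  at most twice the excess it destroys; horizontal cuts are the transposed situation. Summing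
  over the tree gives \<open>GB\<^sub>T(X) \<le> 2 (excess Z + |X|) \<le> 2 |Y|\<close>, because \<open>Z\<close> has at least
  \<open>|X|\<close> rows and \<open>|X|\<close> columns.\<close>

section \<open>Satisfied sets\<close>

lemma in_box_commute: "in_box p q r = in_box q p r"
  unfolding in_box_def by (simp add: min.commute max.commute)

lemma in_box_trans: "in_box p q r \<Longrightarrow> in_box r q s \<Longrightarrow> in_box p q s"
  unfolding in_box_def by linarith

lemma in_box_swap: "in_box (prod.swap p) (prod.swap q) (prod.swap r) = in_box p q r"
  unfolding in_box_def by auto

lemma collinear_pt_swap: "collinear_pt (prod.swap p) (prod.swap q) = collinear_pt p q"
  unfolding collinear_pt_def by auto

lemma satisfied_restrict:
  assumes "satisfied S" and "\<And>p q r. in_box p q r \<Longrightarrow> Q p \<Longrightarrow> Q q \<Longrightarrow> Q r"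
  shows "satisfied {p\<in>S. Q p}"
  using assms unfolding satisfied_def pair_satisfied_def by blast

lemma satisfied_halfplanes_fst:
  assumes "satisfied S"
  shows "satisfied {p\<in>S. real_of_int (fst p) \<le> l}" and "satisfied {p\<in>S. \<not> real_of_int (fst p) \<le> l}"
  by (rule satisfied_restrict[OF assms], unfold in_box_def, linarith)+

lemma satisfied_halfplanes_snd:
  assumes "satisfied S"
  shows "satisfied {p\<in>S. real_of_int (snd p) \<le> l}" and "satisfied {p\<in>S. \<not> real_of_int (snd p) \<le> l}"
  by (rule satisfied_restrict[OF assms], unfold in_box_def, linarith)+

lemma satisfied_swap: "satisfied S \<Longrightarrow> satisfied (prod.swap ` S)"
  unfolding satisfied_def
proof (intro ballI impI)
  fix p q
  assume "\<forall>p\<in>S. \<forall>q\<in>S. \<not> collinear_pt p q \<longrightarrow> pair_satisfied S p q"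
    and "p \<in> prod.swap ` S" "q \<in> prod.swap ` S" "\<not> collinear_pt p q"
  moreover have "\<not> collinear_pt (prod.swap p) (prod.swap q)"
    using \<open>\<not> collinear_pt p q\<close> by (simp add: collinear_pt_swap)
  moreover have "prod.swap p \<in> S" "prod.swap q \<in> S"
    using \<open>p \<in> prod.swap ` S\<close> \<open>q \<in> prod.swap ` S\<close> by auto
  ultimately obtain r where "r \<in> S - {prod.swap p, prod.swap q}" "in_box (prod.swap p) (prod.swap q) r"
    unfolding pair_satisfied_def by blast
  then show "pair_satisfied (prod.swap ` S) p q"
    unfolding pair_satisfied_def using in_box_swap[of "prod.swap p" "prod.swap q" r]
    by (intro bexI[of _ "prod.swap r"]) auto
qed

lemma satisfied_Times: "satisfied (A \<times> B)"
  unfolding satisfied_def pair_satisfied_def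
proof (intro ballI impI)
  fix p q assume "p \<in> A \<times> B" "q \<in> A \<times> B" "\<not> collinear_pt p q"
  then show "\<exists>r\<in>A \<times> B - {p, q}. in_box p q r"
    unfolding collinear_pt_def in_box_def
    by (intro bexI[of _ "(fst p, snd q)"]) (auto simp: prod_eq_iff)
qed

definition l1_dist :: "point \<Rightarrow> point \<Rightarrow> nat" where
  "l1_dist p q = nat (\<bar>fst p - fst q\<bar> + \<bar>snd p - snd q\<bar>)"

lemma l1_dist_commute: "l1_dist p q = l1_dist q p"
  unfolding l1_dist_def by (simp add: abs_minus_commute)

lemma l1_dist_in_box_less: "in_box p q r \<Longrightarrow> r \<noteq> p \<Longrightarrow> l1_dist r q < l1_dist p q"
  unfolding in_box_def l1_dist_def by (auto simp: prod_eq_iff abs_if)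

lemma satisfied_row_crossing:
  assumes sat: "satisfied S"
  shows "u \<in> S \<Longrightarrow> v \<in> S \<Longrightarrow> P (fst u) \<Longrightarrow> \<not> P (fst v) \<Longrightarrow>
    \<exists>a\<in>S. \<exists>b\<in>S. P (fst a) \<and> \<not> P (fst b) \<and> snd a = snd b \<and> in_box u v a"
proof (induction "l1_dist u v" arbitrary: u v rule: less_induct)
  \<comment> \<open>Replace the endpoint on the same side of \<open>P\<close> as a point r of the rectangle of u and v
    by r; this shortens the distance.\<close>
  case less
  show ?case
  proof (cases "snd u = snd v")
    case True
    with less.prems show ?thesis by (intro bexI[of _ u] bexI[of _ v]) (auto simp: in_box_def)
  next
    case False
    with less.prems have "\<not> collinear_pt u v" by (auto simp: collinear_pt_def)
    then obtain r where r: "r \<in> S" "r \<noteq> u" "r \<noteq> v" "in_box u v r"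
      using sat less.prems unfolding satisfied_def pair_satisfied_def by blast
    show ?thesis
    proof (cases "P (fst r)")
      case True
      have "l1_dist r v < l1_dist u v" using r by (simp add: l1_dist_in_box_less)
      with less.hyps r(1) less.prems(2,4) True obtain a b where
        "a \<in> S" "b \<in> S" "P (fst a)" "\<not> P (fst b)" "snd a = snd b" "in_box r v a"
        by blast
      with r(4) show ?thesis by (blast intro: in_box_trans)
    next
      case False
      have "l1_dist u r < l1_dist u v"
        using r by (metis l1_dist_commute l1_dist_in_box_less in_box_commute)
      with less.hyps r(1) less.prems(1,3) False obtain a b where
        "a \<in> S" "b \<in> S" "P (fst a)" "\<not> P (fst b)" "snd a = snd b" "in_box u r a"
        by blast
      with r(4) show ?thesis by (metis in_box_commute in_box_trans)
    qed
  qed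
qed

lemma satisfied_shared_row_between:
  assumes "satisfied S" "p \<in> S" "q \<in> S" "P (fst p) \<noteq> P (fst q)"
  shows "\<exists>y \<in> snd ` {r\<in>S. P (fst r)} \<inter> snd ` {r\<in>S. \<not> P (fst r)}.
    min (snd p) (snd q) \<le> y \<and> y \<le> max (snd p) (snd q)"
proof -
  obtain a b where ab: "a \<in> S" "b \<in> S" "P (fst a)" "\<not> P (fst b)" "snd a = snd b"
    and "in_box p q a"
  proof (cases "P (fst p)")
    case True
    with assms(4) show ?thesis
      using satisfied_row_crossing[OF assms(1-3), of P] that by blast
  next
    case False
    with assms(4) obtain a b where "a \<in> S" "b \<in> S" "P (fst a)" "\<not> P (fst b)" "snd a = snd b"
      and "in_box q p a"
      using satisfied_row_crossing[OF assms(1) assms(3,2), of P] by blast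
    with that show ?thesis
      by (simp add: in_box_commute)
  qed
  from ab have "snd a \<in> snd ` {r\<in>S. P (fst r)} \<inter> snd ` {r\<in>S. \<not> P (fst r)}"
    by (metis (mono_tags, lifting) IntI image_eqI mem_Collect_eq)
  with \<open>in_box p q a\<close> show ?thesis
    unfolding in_box_def by blast
qed

section \<open>Excess\<close>

lemma card_filter_partition:
  "finite A \<Longrightarrow> card A = card {x\<in>A. P x} + card {x\<in>A. \<not> P x}"
  by (subst card_Un_disjoint[symmetric]) (auto intro: arg_cong[where f = card])

definition excess :: "point set \<Rightarrow> int" where
  "excess S = int (card S) - int (card (fst ` S)) - int (card (snd ` S))"

lemma excess_split_fst:
  assumes "finite S"
  shows "excess S = excess {p\<in>S. P (fst p)} + excess {p\<in>S. \<not> P (fst p)}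
    + int (card (snd ` {p\<in>S. P (fst p)} \<inter> snd ` {p\<in>S. \<not> P (fst p)}))"
proof -
  let ?S1 = "{p\<in>S. P (fst p)}" and ?S2 = "{p\<in>S. \<not> P (fst p)}"
  have "card S = card ?S1 + card ?S2"
    using assms by (rule card_filter_partition)
  moreover have "card (fst ` S) = card (fst ` ?S1) + card (fst ` ?S2)"
    using assms by (subst card_Un_disjoint[symmetric]) (auto intro: arg_cong[where f = card])
  moreover have
    "card (snd ` S) + card (snd ` ?S1 \<inter> snd ` ?S2) = card (snd ` ?S1) + card (snd ` ?S2)"
    using assms by (subst card_Un_Int) (auto intro: arg_cong[where f = card])
  ultimately show ?thesis unfolding excess_def by linarith
qed

lemma excess_swap: "excess (prod.swap ` S) = excess S"
  unfolding excess_def by (simp add: card_image image_image)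

lemma filter_swap_image: "{p\<in>prod.swap ` S. Q (fst p)} = prod.swap ` {p\<in>S. Q (snd p)}"
  by auto

lemma excess_split_snd:
  assumes "finite S"
  shows "excess S = excess {p\<in>S. P (snd p)} + excess {p\<in>S. \<not> P (snd p)}
    + int (card (fst ` {p\<in>S. P (snd p)} \<inter> fst ` {p\<in>S. \<not> P (snd p)}))"
  using excess_split_fst[of "prod.swap ` S" P] assms
  by (simp add: filter_swap_image[where Q = P] filter_swap_image[where Q = "\<lambda>x. \<not> P x"]
      excess_swap image_image)

lemma excess_ge_minus_one:
  "finite S \<Longrightarrow> satisfied S \<Longrightarrow> S \<noteq> {} \<Longrightarrow> excess S \<ge> -1"
proof (induction "card S" arbitrary: S rule: less_induct)
  case less
  define m where "m = Max (fst ` S)"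
  let ?S1 = "{p\<in>S. fst p < m}" and ?S2 = "{p\<in>S. \<not> fst p < m}"
  have "m \<in> fst ` S" and "\<forall>p\<in>S. fst p \<le> m"
    using less.prems by (auto simp: m_def)
  then have col: "?S2 = {p\<in>S. fst p = m}" and "?S2 \<noteq> {}"
    by (auto simp: not_less intro: antisym)
  have "inj_on snd ?S2"
    unfolding col by (auto intro: inj_onI simp: prod_eq_iff)
  with \<open>?S2 \<noteq> {}\<close> have col_excess: "excess ?S2 = -1"
    unfolding excess_def col by (auto simp: card_image image_constant_conv)
  show ?case
  proof (cases "?S1 = {}")
    case True
    then have "S = ?S2" by auto
    then have "excess S = excess ?S2" by (rule arg_cong)
    with col_excess show ?thesis by linarith
  next
    case False
    then obtain u v where u: "u \<in> ?S1" and v: "v \<in> ?S2" using \<open>?S2 \<noteq> {}\<close> by blast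
    then have "snd ` ?S1 \<inter> snd ` ?S2 \<noteq> {}"
      using satisfied_shared_row_between[OF less.prems(2), of u v "\<lambda>x. x < m"] by auto
    then have "card (snd ` ?S1 \<inter> snd ` ?S2) \<ge> 1"
      using less.prems(1) by (simp add: Suc_le_eq card_gt_0_iff)
    moreover have "excess ?S1 \<ge> -1"
    proof (rule less.hyps)
      show "card ?S1 < card S"
        using less.prems(1) v by (intro psubset_card_mono) blast+
      show "satisfied ?S1"
        by (rule satisfied_restrict[OF less.prems(2)]) (auto simp: in_box_def)
    qed (use less.prems(1) False in simp_all)
    ultimately show ?thesis
      using excess_split_fst[OF less.prems(1), of "\<lambda>x. x < m"] col_excess by linarith
  qed
qed

lemma permutation_inj_on_fst: "is_permutation X \<Longrightarrow> inj_on fst X"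
  unfolding is_permutation_def inj_on_def by blast

lemma permutation_inj_on_snd: "is_permutation X \<Longrightarrow> inj_on snd X"
  unfolding is_permutation_def inj_on_def by blast

lemma excess_Un_permutation_le:
  assumes "finite X" "finite Y" "is_permutation X"
  shows "excess (X \<union> Y) + int (card X) \<le> int (card Y)"
proof -
  have "card X = card (fst ` X)" "card X = card (snd ` X)"
    using assms(3) by (simp_all add: card_image permutation_inj_on_fst permutation_inj_on_snd)
  moreover have "card (fst ` X) \<le> card (fst ` (X \<union> Y))" "card (snd ` X) \<le> card (snd ` (X \<union> Y))"
    using assms(1,2) by (simp_all add: card_mono image_mono)
  moreover have "card (X \<union> Y) \<le> card X + card Y"
    by (rule card_Un_le)
  ultimately show ?thesis
    unfolding excess_def by linarith
qed

section \<open>Cost of a cut\<close>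

definition consecutive :: "('a \<Rightarrow> int) \<Rightarrow> 'a set \<Rightarrow> 'a \<Rightarrow> 'a \<Rightarrow> bool" where
  "consecutive g A p q \<longleftrightarrow>
     p \<in> A \<and> q \<in> A \<and> g p < g q \<and> \<not> (\<exists>r\<in>A. g p < g r \<and> g r < g q)"

lemma vcost_consecutive:
  "vcost S l = card {(p, q). consecutive snd S p q \<and>
     (real_of_int (fst p) < l \<longleftrightarrow> l < real_of_int (fst q))}"
  unfolding vcost_def consecutive_def by (simp add: conj_assoc)

lemma hcost_consecutive:
  "hcost S l = card {(p, q). consecutive fst S p q \<and>
     (real_of_int (snd p) < l \<longleftrightarrow> l < real_of_int (snd q))}"
  unfolding hcost_def consecutive_def by (simp add: conj_assoc)

lemma consecutive_straddling_unique:
  assumes "inj_on g A" "consecutive g A p q" "consecutive g A p' q'"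
    and "g p \<le> y" "y < g q" "g p' \<le> y" "y < g q'"
  shows "(p, q) = (p', q')"
proof -
  from assms(2-) have "g p = g p'" "g q = g q'"
    unfolding consecutive_def by (meson antisym le_less_trans not_le order_trans)+
  with assms(1-3) show ?thesis
    unfolding consecutive_def by (auto dest: inj_onD)
qed

lemma consecutive_top_unique:
  assumes "inj_on g A" "consecutive g A p q" "consecutive g A p' q'" "g q = g q'"
  shows "(p, q) = (p', q')"
proof -
  from assms(2-) have "g p = g p'"
    unfolding consecutive_def by (metis antisym not_le)
  with assms show ?thesis
    unfolding consecutive_def by (auto dest: inj_onD)
qed

lemma card_consecutive_straddling_le:
  assumes "finite A" "inj_on g A"
  shows "card {(p, q). consecutive g A p q \<and> g p \<le> y \<and> y \<le> g q} \<le> 2"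
proof -
  let ?F1 = "{(p, q). consecutive g A p q \<and> g p \<le> y \<and> y < g q}"
  let ?F2 = "{(p, q). consecutive g A p q \<and> g q = y}"
  have fin: "finite ?F1" "finite ?F2"
    by (auto intro: finite_subset[of _ "A \<times> A"] simp: assms(1) consecutive_def)
  have "card ?F1 \<le> 1"
    using consecutive_straddling_unique[OF assms(2)] by (auto simp: card_le_Suc0_iff_eq[OF fin(1)])
  moreover have "card ?F2 \<le> 1"
    using consecutive_top_unique[OF assms(2)] by (auto simp: card_le_Suc0_iff_eq[OF fin(2)])
  moreover have "card {(p, q). consecutive g A p q \<and> g p \<le> y \<and> y \<le> g q} \<le> card (?F1 \<union> ?F2)"
    using fin by (intro card_mono) auto
  ultimately show ?thesis
    using card_Un_le[of ?F1 ?F2] by linarith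
qed

lemma vcost_le_shared_rows:
  assumes "finite S" "satisfied S" "A \<subseteq> S" "inj_on snd A"
    and off_line: "\<forall>p\<in>A. real_of_int (fst p) \<noteq> l"
  shows "vcost A l \<le>
    2 * card (snd ` {p\<in>S. real_of_int (fst p) \<le> l} \<inter> snd ` {p\<in>S. \<not> real_of_int (fst p) \<le> l})"
    (is "_ \<le> 2 * card ?C")
proof -
  let ?crossing = "{(p, q). consecutive snd A p q \<and>
    (real_of_int (fst p) < l \<longleftrightarrow> l < real_of_int (fst q))}"
  let ?F = "\<lambda>y. {(p, q). consecutive snd A p q \<and> snd p \<le> y \<and> y \<le> snd q}"
  have finA: "finite A" using assms(1,3) by (rule finite_subset[rotated])
  have "?crossing \<subseteq> (\<Union>y\<in>?C. ?F y)"
  proof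
    fix x assume "x \<in> ?crossing"
    then obtain p q where x: "x = (p, q)" and cons: "consecutive snd A p q"
      and cross: "real_of_int (fst p) < l \<longleftrightarrow> l < real_of_int (fst q)"
      by blast
    then have pq: "p \<in> S" "q \<in> S" "snd p < snd q"
      and sides: "(real_of_int (fst p) \<le> l) \<noteq> (real_of_int (fst q) \<le> l)"
      using assms(3) off_line unfolding consecutive_def by auto
    obtain y where "y \<in> ?C" "min (snd p) (snd q) \<le> y" "y \<le> max (snd p) (snd q)"
      using satisfied_shared_row_between[OF assms(2) pq(1,2) sides] by blast
    with pq(3) cons x show "x \<in> (\<Union>y\<in>?C. ?F y)"
      by auto
  qed
  then have "card ?crossing \<le> card (\<Union>y\<in>?C. ?F y)"
    using assms(1) finA
    by (intro card_mono) (auto intro: finite_subset[of _ "A \<times> A"] simp: consecutive_def)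
  also have "\<dots> \<le> (\<Sum>y\<in>?C. card (?F y))"
    by (rule card_UN_le) (use assms(1) in simp)
  also have "\<dots> \<le> (\<Sum>y\<in>?C. 2)"
    by (rule sum_mono) (rule card_consecutive_straddling_le[OF finA assms(4)])
  finally show ?thesis
    by (simp add: vcost_consecutive mult.commute)
qed

lemma hcost_swap: "hcost A l = vcost (prod.swap ` A) l"
proof -
  have "{(p, q). consecutive snd (prod.swap ` A) p q \<and>
      (real_of_int (fst p) < l \<longleftrightarrow> l < real_of_int (fst q))}
    = map_prod prod.swap prod.swap ` {(p, q). consecutive fst A p q \<and>
      (real_of_int (snd p) < l \<longleftrightarrow> l < real_of_int (snd q))}"
    unfolding consecutive_def by (auto simp: image_iff)
  then show ?thesis
    unfolding hcost_consecutive vcost_consecutive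
    by (simp add: card_image inj_on_def)
qed

lemma hcost_le_shared_cols:
  assumes "finite S" "satisfied S" "A \<subseteq> S" "inj_on fst A"
    and "\<forall>p\<in>A. real_of_int (snd p) \<noteq> l"
  shows "hcost A l \<le>
    2 * card (fst ` {p\<in>S. real_of_int (snd p) \<le> l} \<inter> fst ` {p\<in>S. \<not> real_of_int (snd p) \<le> l})"
proof -
  have "vcost (prod.swap ` A) l \<le> 2 * card (snd ` {p\<in>prod.swap ` S. real_of_int (fst p) \<le> l}
      \<inter> snd ` {p\<in>prod.swap ` S. \<not> real_of_int (fst p) \<le> l})"
    using assms by (intro vcost_le_shared_rows) (auto simp: satisfied_swap inj_on_def)
  then show ?thesis
    by (simp add: hcost_swap filter_swap_image[where Q = "\<lambda>x. real_of_int x \<le> l"]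
        filter_swap_image[where Q = "\<lambda>x. \<not> real_of_int x \<le> l"] image_image)
qed

section \<open>Guillotine trees\<close>

lemma inR_subset: "inR X R \<subseteq> X"
  by (cases R) (auto simp: inR_def)

lemma inR_vsplit:
  assumes "a \<le> l" "l \<le> b" "\<forall>p\<in>inR X (a,b,c,d). real_of_int (fst p) \<noteq> l"
  shows "inR X (a,l,c,d) = {p\<in>inR X (a,b,c,d). real_of_int (fst p) \<le> l}"
    and "inR X (l,b,c,d) = {p\<in>inR X (a,b,c,d). \<not> real_of_int (fst p) \<le> l}"
  using assms unfolding inR_def by force+

lemma inR_hsplit:
  assumes "c \<le> l" "l \<le> d" "\<forall>p\<in>inR X (a,b,c,d). real_of_int (snd p) \<noteq> l"
  shows "inR X (a,b,c,l) = {p\<in>inR X (a,b,c,d). real_of_int (snd p) \<le> l}"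
    and "inR X (a,b,l,d) = {p\<in>inR X (a,b,c,d). \<not> real_of_int (snd p) \<le> l}"
  using assms unfolding inR_def by force+

lemma gb_tree_le_excess:
  assumes perm: "is_permutation X"
  shows "valid_gtree X R T \<Longrightarrow> finite S \<Longrightarrow> satisfied S \<Longrightarrow>
    inR X R \<subseteq> S \<Longrightarrow> inR X R \<noteq> {} \<Longrightarrow> int (gb_tree X R T) \<le> 2 * (excess S + int (card (inR X R)))"
proof (induction T arbitrary: R S)
  case Leaf
  then have "card (inR X R) \<noteq> 0" and "S \<noteq> {}"
    by (auto dest: finite_subset)
  with excess_ge_minus_one[OF Leaf.prems(2,3)] show ?case
    by simp
next
  case (VCut l T1 T2)
  obtain a b c d where R: "R = (a, b, c, d)" by (cases R)
  let ?S1 = "{p\<in>S. real_of_int (fst p) \<le> l}" and ?S2 = "{p\<in>S. \<not> real_of_int (fst p) \<le> l}"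
  from VCut.prems(1) have cut: "a < l" "l < b" "\<forall>p\<in>inR X R. real_of_int (fst p) \<noteq> l"
    and nonempty: "inR X (a,l,c,d) \<noteq> {}" "inR X (l,b,c,d) \<noteq> {}"
    and valid: "valid_gtree X (a,l,c,d) T1" "valid_gtree X (l,b,c,d) T2"
    by (simp_all add: R)
  note halves =
    inR_vsplit[OF less_imp_le[OF cut(1)] less_imp_le[OF cut(2)] cut(3)[unfolded R], folded R]
  have "int (gb_tree X (a,l,c,d) T1) \<le> 2 * (excess ?S1 + int (card (inR X (a,l,c,d))))"
    using VCut.prems cut halves nonempty
    by (intro VCut.IH(1)[OF valid(1)]) (auto simp: satisfied_halfplanes_fst)
  moreover have "int (gb_tree X (l,b,c,d) T2) \<le> 2 * (excess ?S2 + int (card (inR X (l,b,c,d))))"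
    using VCut.prems cut halves nonempty
    by (intro VCut.IH(2)[OF valid(2)]) (auto simp: satisfied_halfplanes_fst)
  moreover have "vcost (inR X R) l \<le> 2 * card (snd ` ?S1 \<inter> snd ` ?S2)"
    using VCut.prems cut inj_on_subset[OF permutation_inj_on_snd[OF perm] inR_subset]
    by (intro vcost_le_shared_rows) auto
  moreover have "card (inR X R) = card (inR X (a,l,c,d)) + card (inR X (l,b,c,d))"
    using VCut.prems cut halves by (simp add: card_filter_partition finite_subset)
  ultimately show ?case
    using excess_split_fst[OF VCut.prems(2), of "\<lambda>x. real_of_int x \<le> l"] by (simp add: R)
next
  case (HCut l T1 T2)
  obtain a b c d where R: "R = (a, b, c, d)" by (cases R)
  let ?S1 = "{p\<in>S. real_of_int (snd p) \<le> l}" and ?S2 = "{p\<in>S. \<not> real_of_int (snd p) \<le> l}"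
  from HCut.prems(1) have cut: "c < l" "l < d" "\<forall>p\<in>inR X R. real_of_int (snd p) \<noteq> l"
    and nonempty: "inR X (a,b,c,l) \<noteq> {}" "inR X (a,b,l,d) \<noteq> {}"
    and valid: "valid_gtree X (a,b,c,l) T1" "valid_gtree X (a,b,l,d) T2"
    by (simp_all add: R)
  note halves =
    inR_hsplit[OF less_imp_le[OF cut(1)] less_imp_le[OF cut(2)] cut(3)[unfolded R], folded R]
  have "int (gb_tree X (a,b,c,l) T1) \<le> 2 * (excess ?S1 + int (card (inR X (a,b,c,l))))"
    using HCut.prems cut halves nonempty
    by (intro HCut.IH(1)[OF valid(1)]) (auto simp: satisfied_halfplanes_snd)
  moreover have "int (gb_tree X (a,b,l,d) T2) \<le> 2 * (excess ?S2 + int (card (inR X (a,b,l,d))))"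
    using HCut.prems cut halves nonempty
    by (intro HCut.IH(2)[OF valid(2)]) (auto simp: satisfied_halfplanes_snd)
  moreover have "hcost (inR X R) l \<le> 2 * card (fst ` ?S1 \<inter> fst ` ?S2)"
    using HCut.prems cut inj_on_subset[OF permutation_inj_on_fst[OF perm] inR_subset]
    by (intro hcost_le_shared_cols) auto
  moreover have "card (inR X R) = card (inR X (a,b,c,l)) + card (inR X (a,b,l,d))"
    using HCut.prems cut halves by (simp add: card_filter_partition finite_subset)
  ultimately show ?case
    using excess_split_snd[OF HCut.prems(2), of "\<lambda>x. real_of_int x \<le> l"] by (simp add: R)
qed

lemma vcut_between:
  assumes p: "p \<in> inR X (a,b,c,d)" and q: "q \<in> inR X (a,b,c,d)" and "fst p < fst q"
  obtains l where "a < l" "l < b" "\<forall>r\<in>inR X (a,b,c,d). real_of_int (fst r) \<noteq> l"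
    and "p \<in> inR X (a,l,c,d)" "q \<in> inR X (l,b,c,d)"
proof
  let ?l = "real_of_int (fst p) + 1/2"
  show "a < ?l" "?l < b" "p \<in> inR X (a,?l,c,d)" "q \<in> inR X (?l,b,c,d)"
    using p q \<open>fst p < fst q\<close> unfolding inR_def by auto
  show "\<forall>r\<in>inR X (a,b,c,d). real_of_int (fst r) \<noteq> ?l"
  proof
    fix r
    show "real_of_int (fst r) \<noteq> ?l"
      by (cases "fst r \<le> fst p") linarith+
  qed
qed

lemma valid_gtree_exists:
  assumes "finite X" "is_permutation X"
  shows "\<exists>T. valid_gtree X R T"
proof (induction "card (inR X R)" arbitrary: R rule: less_induct)
  case less
  obtain a b c d where R: "R = (a, b, c, d)" by (cases R)
  have fin: "finite (inR X R)"
    using assms(1) inR_subset by (rule finite_subset[rotated])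
  show ?case
  proof (cases "card (inR X R) \<le> 1")
    case True
    then show ?thesis by (metis valid_gtree.simps(1))
  next
    case False
    then obtain x y where "x \<in> inR X R" "y \<in> inR X R" "x \<noteq> y"
      using card_le_Suc0_iff_eq[OF fin] by auto
    moreover from this have "fst x \<noteq> fst y"
      using assms(2) inR_subset unfolding is_permutation_def by blast
    ultimately obtain p q where "p \<in> inR X R" "q \<in> inR X R" "fst p < fst q"
      by (metis linorder_neq_iff)
    then obtain l where cut: "a < l" "l < b" "\<forall>r\<in>inR X R. real_of_int (fst r) \<noteq> l"
      and "p \<in> inR X (a,l,c,d)" "q \<in> inR X (l,b,c,d)"
      unfolding R by (rule vcut_between)
    moreover note halves =
      inR_vsplit[OF less_imp_le[OF cut(1)] less_imp_le[OF cut(2)] cut(3)[unfolded R], folded R]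
    ultimately have "inR X (a,l,c,d) \<subset> inR X R" "inR X (l,b,c,d) \<subset> inR X R"
      by auto
    then obtain T1 T2 where "valid_gtree X (a,l,c,d) T1" "valid_gtree X (l,b,c,d) T2"
      using less.hyps fin by (metis psubset_card_mono)
    with cut \<open>p \<in> inR X (a,l,c,d)\<close> \<open>q \<in> inR X (l,b,c,d)\<close>
    have "valid_gtree X R (VCut l T1 T2)"
      unfolding R by auto
    then show ?thesis ..
  qed
qed

lemma bbox_exists: "finite X \<Longrightarrow> \<exists>B. is_bbox X B"
proof -
  assume "finite X"
  define M where "M = (\<Sum>p\<in>X. \<bar>fst p\<bar> + \<bar>snd p\<bar>)"
  have "\<bar>fst p\<bar> + \<bar>snd p\<bar> \<le> M" if "p \<in> X" for p
    unfolding M_def by (rule member_le_sum[OF that _ \<open>finite X\<close>]) simp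
  then have "inR X (- M, M, - M, M) = X"
    unfolding inR_def by (force simp: abs_le_iff)
  then show ?thesis
    unfolding is_bbox_def by blast
qed

lemma opt_attained:
  assumes "finite X"
  shows "\<exists>Y. finite Y \<and> card Y = opt X \<and> satisfied (X \<union> Y)"
proof -
  have "X \<union> fst ` X \<times> snd ` X = fst ` X \<times> snd ` X"
    by force
  then have "\<exists>k Y. finite Y \<and> card Y = k \<and> satisfied (X \<union> Y)"
    using assms satisfied_Times by (metis finite_SigmaI finite_imageI)
  then show ?thesis
    unfolding opt_def by (rule LeastI_ex)
qed

lemma GB_le:
  assumes "finite X" "is_permutation X"
    and "\<And>B T. is_bbox X B \<Longrightarrow> valid_gtree X B T \<Longrightarrow> gb_tree X B T \<le> n"
  shows "GB X \<le> n"
proof -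
  let ?G = "{gb_tree X B T | B T. is_bbox X B \<and> valid_gtree X B T}"
  obtain B T where "is_bbox X B" "valid_gtree X B T"
    using bbox_exists valid_gtree_exists assms(1,2) by blast
  then have "?G \<noteq> {}" by blast
  moreover have "?G \<subseteq> {..n}"
    using assms(3) by auto
  ultimately show ?thesis
    unfolding GB_def by (meson Max_le_iff atMost_iff finite_atMost finite_subset subsetD)
qed

lemma gb_tree_le_twice_card:
  assumes "finite X" "is_permutation X" "finite Y" "satisfied (X \<union> Y)"
    and "is_bbox X B" "valid_gtree X B T"
  shows "gb_tree X B T \<le> 2 * card Y"
proof (cases "X = {}")
  case True
  obtain a b c d where "B = (a, b, c, d)" by (cases B)
  with True assms(6) show ?thesis
    by (cases T) (auto simp: inR_def)
next
  case False
  with assms(5) have "inR X B = X" "inR X B \<noteq> {}"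
    unfolding is_bbox_def by simp_all
  with gb_tree_le_excess[OF assms(2,6), of "X \<union> Y"] assms(1,3,4)
  have "int (gb_tree X B T) \<le> 2 * (excess (X \<union> Y) + int (card X))"
    by simp
  with excess_Un_permutation_le[OF assms(1,3,2)] have "int (gb_tree X B T) \<le> 2 * int (card Y)"
    unfolding distrib_left by linarith
  then show ?thesis
    by linarith
qed

theorem lemma5p3:
  fixes X :: "point set"
  assumes "finite X" and "is_permutation X"
  shows "GB X \<le> 2 * opt X"
proof -
  obtain Y where Y: "finite Y" "card Y = opt X" "satisfied (X \<union> Y)"
    using opt_attained[OF assms(1)] by blast
  show ?thesis
  proof (rule GB_le[OF assms])
    fix B T
    assume "is_bbox X B" "valid_gtree X B T"
    with assms Y show "gb_tree X B T \<le> 2 * opt X"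
      by (metis gb_tree_le_twice_card)
  qed
qed

end
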